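(* Let $p$ be an odd prime and let $c,d$ be positive integers with $36\log_2 p\leq d\leq 3\log_2 c$. Let $L\in\mathbb{F}_p^{d\times c}$ be a matrix whose columns are pairwise distinct vectors of $\mathbb{F}_p^d$, and let $v$ be uniformly distributed on $\{0,1\}^d\subseteq\mathbb{F}_p^d$. Then \[ \mathbb{P}\big[L^\top v\in\{0,1\}^c\big]\leq 3\cdot 2^{-d/(36p^2)} . \] *)

theory Defs
  imports "HOL-Probability.Probability"
begin

text \<open>F_p is represented by the residues {0..<p} of int; arithmetic is taken mod p.
  A d x c matrix L over F_p is a function L i j (row i < d, column j < c) with entries in {0..<p}.\<close>

definition binvecs :: "nat \<Rightarrow> (nat \<Rightarrow> int) set" where
  "binvecs d = ({0..<d} \<rightarrow>\<^sub>E {0, 1})"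

definition is_Fp_matrix :: "nat \<Rightarrow> nat \<Rightarrow> nat \<Rightarrow> (nat \<Rightarrow> nat \<Rightarrow> int) \<Rightarrow> bool" where
  "is_Fp_matrix p d c L \<longleftrightarrow> (\<forall>i<d. \<forall>j<c. L i j \<in> {0..<int p})"

definition distinct_columns :: "nat \<Rightarrow> nat \<Rightarrow> (nat \<Rightarrow> nat \<Rightarrow> int) \<Rightarrow> bool" where
  "distinct_columns d c L \<longleftrightarrow> (\<forall>j<c. \<forall>k<c. j \<noteq> k \<longrightarrow> (\<exists>i<d. L i j \<noteq> L i k))"

definition transp_mult_mod :: "nat \<Rightarrow> nat \<Rightarrow> (nat \<Rightarrow> nat \<Rightarrow> int) \<Rightarrow> (nat \<Rightarrow> int) \<Rightarrow> nat \<Rightarrow> int" where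
  "transp_mult_mod p d L v j = (\<Sum>i<d. L i j * v i) mod int p"

end

(*
  Let E be the set of v in {0,1}^d with L^T v in {0,1}^c, and delta = |E| / 2^d its density.
  Each column of L is a linear form on F_p^d which, up to a shift, takes only the values 0 and 1
  on E (a boolean form on E).  Split a set of 0/1-vectors by its last coordinate and count, for
  each form in the first n coordinates, its admissible last coefficients: by induction on n, at
  most delta^(-log2 p) forms are constant on a set of density delta, and at most
  (1 + 4pn) delta^(-2 log2 p) are boolean on it.  The crucial case is a boolean form which is
  constant on neither slice: each slice then has two points where the form takes both values
  0 and 1, which determines twice the last coefficient mod p, hence the coefficient, p being odd.
*)
theory Submission
  imports Defs "HOL-Number_Theory.Cong"
begin

section \<open>Residues modulo m\<close>

lemma card_le_card_if_cong:
  fixes S D :: "int set"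
  assumes "S \<subseteq> {0..<m}" "finite D" "\<And>a. a \<in> S \<Longrightarrow> \<exists>e\<in>D. [a = e] (mod m)"
  shows "card S \<le> card D"
proof -
  have "S \<subseteq> (\<lambda>e. e mod m) ` D"
  proof
    fix a assume "a \<in> S"
    then obtain e where "e \<in> D" "[a = e] (mod m)"
      using assms(3) by blast
    moreover have "a = a mod m"
      using \<open>a \<in> S\<close> assms(1) by auto
    ultimately show "a \<in> (\<lambda>e. e mod m) ` D"
      unfolding cong_def by auto
  qed
  then have "card S \<le> card ((\<lambda>e. e mod m) ` D)"
    using assms(2) by (intro card_mono) auto
  also have "\<dots> \<le> card D"
    using assms(2) by (rule card_image_le)
  finally show ?thesis .
qed

lemma card_le_1_if_cong:
  fixes S :: "int set"
  assumes "S \<subseteq> {0..<m}" "\<And>a b. a \<in> S \<Longrightarrow> b \<in> S \<Longrightarrow> [a = b] (mod m)"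
  shows "card S \<le> 1"
proof (cases "S = {}")
  case False
  then obtain b where "b \<in> S" by blast
  then have "card S \<le> card {b}"
    using assms by (intro card_le_card_if_cong) auto
  then show ?thesis by simp
qed simp

lemma cong_add_eq_1_if_distinct_bits:
  fixes x y m :: int
  assumes "x mod m \<in> {0, 1}" "y mod m \<in> {0, 1}" "[x \<noteq> y] (mod m)"
  shows "[x + y = 1] (mod m)"
proof -
  have "x mod m + y mod m = 1"
    using assms by (auto simp: cong_def)
  then show ?thesis
    unfolding cong_def by (metis mod_add_eq)
qed

section \<open>Slices and fibres\<close>

definition Fp_vectors :: "nat \<Rightarrow> nat \<Rightarrow> (nat \<Rightarrow> int) set" where
  "Fp_vectors p n = {0..<n} \<rightarrow>\<^sub>E {0..<int p}"

definition dot :: "nat \<Rightarrow> (nat \<Rightarrow> int) \<Rightarrow> (nat \<Rightarrow> int) \<Rightarrow> int" where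
  "dot n u x = (\<Sum>i<n. u i * x i)"

definition slice :: "nat \<Rightarrow> (nat \<Rightarrow> int) set \<Rightarrow> int \<Rightarrow> (nat \<Rightarrow> int) set" where
  "slice n F j = {x \<in> binvecs n. x(n := j) \<in> F}"

definition fibre :: "nat \<Rightarrow> nat \<Rightarrow> (nat \<Rightarrow> int) set \<Rightarrow> (nat \<Rightarrow> int) \<Rightarrow> int set" where
  "fibre p n X w = {a \<in> {0..<int p}. w(n := a) \<in> X}"

definition cube_density :: "nat \<Rightarrow> (nat \<Rightarrow> int) set \<Rightarrow> real" where
  "cube_density n F = card F / 2 ^ n"

lemma finite_Fp_vectors [simp]: "finite (Fp_vectors p n)"
  unfolding Fp_vectors_def by (intro finite_PiE) auto

lemma card_Fp_vectors: "card (Fp_vectors p n) = p ^ n"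
  unfolding Fp_vectors_def by (simp add: card_PiE)

lemma finite_binvecs [simp]: "finite (binvecs n)"
  unfolding binvecs_def by (intro finite_PiE) auto

lemma card_binvecs: "card (binvecs n) = 2 ^ n"
  unfolding binvecs_def by (simp add: card_PiE numeral_2_eq_2)

lemma dot_fun_upd: "dot (Suc n) (w(n := a)) (x(n := j)) = dot n w x + a * j"
  unfolding dot_def by (simp add: sum.lessThan_Suc)

lemma Fp_vectors_SucE:
  assumes "u \<in> Fp_vectors p (Suc n)"
  obtains w a where "w \<in> Fp_vectors p n" "a \<in> {0..<int p}" "u = w(n := a)"
proof
  show "u(n := undefined) \<in> Fp_vectors p n" "u n \<in> {0..<int p}"
    using assms by (auto simp: Fp_vectors_def PiE_iff extensional_def)
qed simp

lemma binvecs_SucE: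
  assumes "y \<in> binvecs (Suc n)"
  obtains x j where "x \<in> binvecs n" "j \<in> {0, 1}" "y = x(n := j)"
proof
  show "y(n := undefined) \<in> binvecs n" "y n \<in> {0, 1}"
    using assms by (auto simp: binvecs_def PiE_iff extensional_def)
qed simp

lemma fun_upd_inj_on_binvecs: "inj_on (\<lambda>x. x(n := j)) (binvecs n)"
proof (rule inj_onI)
  fix x y assume "x \<in> binvecs n" "y \<in> binvecs n" "x(n := j) = y(n := j)"
  then have "x i = y i" for i
    by (cases "i = n") (auto simp: binvecs_def PiE_iff extensional_def dest: fun_cong[of _ _ i])
  then show "x = y" ..
qed

lemma slice_subset_binvecs: "slice n F j \<subseteq> binvecs n"
  by (auto simp: slice_def)

lemma finite_fibre [simp]: "finite (fibre p n X w)"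
  unfolding fibre_def by (rule finite_subset[of _ "{0..<int p}"]) auto

lemma card_fibre_le: "card (fibre p n X w) \<le> p"
proof -
  have "card (fibre p n X w) \<le> card {0..<int p}"
    unfolding fibre_def by (rule card_mono) auto
  then show ?thesis by simp
qed

lemma card_le_sum_card_fibre:
  assumes "X \<subseteq> Fp_vectors p (Suc n)" "finite Y"
    and "\<And>w a. w \<in> Fp_vectors p n \<Longrightarrow> w(n := a) \<in> X \<Longrightarrow> w \<in> Y"
  shows "card X \<le> (\<Sum>w\<in>Y. card (fibre p n X w))"
proof -
  let ?S = "Sigma Y (fibre p n X)"
  have "X \<subseteq> (\<lambda>(w, a). w(n := a)) ` ?S"
  proof
    fix u assume "u \<in> X"
    moreover obtain w a where "w \<in> Fp_vectors p n" "a \<in> {0..<int p}" "u = w(n := a)"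
      using Fp_vectors_SucE \<open>u \<in> X\<close> assms(1) by blast
    ultimately show "u \<in> (\<lambda>(w, a). w(n := a)) ` ?S"
      using assms(3) by (auto simp: fibre_def)
  qed
  then have "card X \<le> card ((\<lambda>(w, a). w(n := a)) ` ?S)"
    using assms(2) by (intro card_mono) auto
  also have "\<dots> \<le> card ?S"
    using assms(2) by (intro card_image_le) auto
  also have "\<dots> = (\<Sum>w\<in>Y. card (fibre p n X w))"
    using assms(2) by (intro card_SigmaI) auto
  finally show ?thesis .
qed

lemma card_le_mult_card_if_card_fibre_le:
  assumes "X \<subseteq> Fp_vectors p (Suc n)" "finite Y"
    and "\<And>w a. w \<in> Fp_vectors p n \<Longrightarrow> w(n := a) \<in> X \<Longrightarrow> w \<in> Y"
    and "\<And>w. w \<in> Y \<Longrightarrow> card (fibre p n X w) \<le> k"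
  shows "card X \<le> k * card Y"
proof -
  have "card X \<le> (\<Sum>w\<in>Y. card (fibre p n X w))"
    using assms(1-3) by (rule card_le_sum_card_fibre)
  also have "\<dots> \<le> (\<Sum>w\<in>Y. k)"
    using assms(4) by (rule sum_mono)
  finally show ?thesis by (simp add: mult.commute)
qed

lemma card_slices:
  assumes "F \<subseteq> binvecs (Suc n)"
  shows "card F = card (slice n F 0) + card (slice n F 1)"
proof -
  have F: "F = (\<lambda>x. x(n := 0)) ` slice n F 0 \<union> (\<lambda>x. x(n := 1)) ` slice n F 1"
  proof
    show "F \<subseteq> (\<lambda>x. x(n := 0)) ` slice n F 0 \<union> (\<lambda>x. x(n := 1)) ` slice n F 1"
    proof
      fix y assume "y \<in> F"
      moreover obtain x j where "x \<in> binvecs n" "j \<in> {0, 1}" "y = x(n := j)"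
        using binvecs_SucE \<open>y \<in> F\<close> assms by blast
      ultimately show "y \<in> (\<lambda>x. x(n := 0)) ` slice n F 0 \<union> (\<lambda>x. x(n := 1)) ` slice n F 1"
        by (auto simp: slice_def)
    qed
  qed (auto simp: slice_def)
  have "(\<lambda>x. x(n := 0)) ` slice n F 0 \<inter> (\<lambda>x. x(n := 1)) ` slice n F 1 = {}"
    by (auto dest: fun_cong[of _ _ n])
  then have "card F = card ((\<lambda>x. x(n := 0)) ` slice n F 0) + card ((\<lambda>x. x(n := 1)) ` slice n F 1)"
    by (subst F, intro card_Un_disjoint) (auto simp: slice_def)
  also have "\<dots> = card (slice n F 0) + card (slice n F 1)"
    by (intro arg_cong2[where f = "(+)"] card_image inj_on_subset[OF fun_upd_inj_on_binvecs])
      (auto simp: slice_def)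
  finally show ?thesis .
qed

lemma cube_density_nonneg: "0 \<le> cube_density n F"
  by (simp add: cube_density_def)

lemma cube_density_le_1: "F \<subseteq> binvecs n \<Longrightarrow> cube_density n F \<le> 1"
  using card_mono[OF finite_binvecs, of F n] by (simp add: cube_density_def card_binvecs)

lemma cube_density_pos_iff:
  assumes "F \<subseteq> binvecs n"
  shows "0 < cube_density n F \<longleftrightarrow> F \<noteq> {}"
proof -
  have "finite F"
    using assms by (rule finite_subset) simp
  then show ?thesis
    by (simp add: cube_density_def card_gt_0_iff zero_less_divide_iff)
qed

section \<open>Constant and boolean linear forms\<close>

definition constant_forms :: "nat \<Rightarrow> nat \<Rightarrow> (nat \<Rightarrow> int) set \<Rightarrow> (nat \<Rightarrow> int) set" where
  "constant_forms p n F = {u \<in> Fp_vectors p n. \<exists>s. \<forall>x\<in>F. [dot n u x = s] (mod int p)}"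

definition boolean_forms :: "nat \<Rightarrow> nat \<Rightarrow> (nat \<Rightarrow> int) set \<Rightarrow> (nat \<Rightarrow> int) set" where
  "boolean_forms p n E = {u \<in> Fp_vectors p n. \<exists>t. \<forall>x\<in>E. (dot n u x - t) mod int p \<in> {0, 1}}"

lemma constant_forms_subset: "constant_forms p n F \<subseteq> Fp_vectors p n"
  by (auto simp: constant_forms_def)

lemma boolean_forms_subset: "boolean_forms p n E \<subseteq> Fp_vectors p n"
  by (auto simp: boolean_forms_def)

lemma constant_forms_SucE:
  assumes "w(n := a) \<in> constant_forms p (Suc n) F"
  obtains s where "\<forall>j. \<forall>x\<in>slice n F j. [dot n w x + a * j = s] (mod int p)"
proof -
  from assms obtain s where "\<forall>y\<in>F. [dot (Suc n) (w(n := a)) y = s] (mod int p)"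
    unfolding constant_forms_def by blast
  then show ?thesis
    by (intro that[of s]) (auto simp: slice_def simp flip: dot_fun_upd)
qed

lemma boolean_forms_SucE:
  assumes "w(n := a) \<in> boolean_forms p (Suc n) E"
  obtains t where "\<forall>j. \<forall>x\<in>slice n E j. (dot n w x + a * j - t) mod int p \<in> {0, 1}"
proof -
  from assms obtain t where "\<forall>y\<in>E. (dot (Suc n) (w(n := a)) y - t) mod int p \<in> {0, 1}"
    unfolding boolean_forms_def by blast
  then show ?thesis
    by (intro that[of t]) (auto simp: slice_def simp flip: dot_fun_upd)
qed

lemma constant_forms_slice:
  assumes "w \<in> Fp_vectors p n" "w(n := a) \<in> constant_forms p (Suc n) F"
  shows "w \<in> constant_forms p n (slice n F j)"
proof -
  obtain s where s: "\<forall>j. \<forall>x\<in>slice n F j. [dot n w x + a * j = s] (mod int p)"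
    using assms(2) by (rule constant_forms_SucE)
  have "[dot n w x = s - a * j] (mod int p)" if "x \<in> slice n F j" for x
    using cong_diff[OF s[rule_format, OF that] cong_refl[of "a * j"]] by simp
  with assms(1) show ?thesis
    unfolding constant_forms_def by blast
qed

lemma boolean_forms_slice:
  assumes "w \<in> Fp_vectors p n" "w(n := a) \<in> boolean_forms p (Suc n) E"
  shows "w \<in> boolean_forms p n (slice n E j)"
proof -
  obtain t where t: "\<forall>j. \<forall>x\<in>slice n E j. (dot n w x + a * j - t) mod int p \<in> {0, 1}"
    using assms(2) by (rule boolean_forms_SucE)
  have "(dot n w x - (t - a * j)) mod int p \<in> {0, 1}" if "x \<in> slice n E j" for x
    using t[rule_format, OF that] by (simp add: algebra_simps)
  with assms(1) show ?thesis
    unfolding boolean_forms_def by blast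
qed

lemma not_in_constant_formsE:
  assumes "w \<in> Fp_vectors p n" "w \<notin> constant_forms p n F"
  obtains x y where "x \<in> F" "y \<in> F" "[dot n w x \<noteq> dot n w y] (mod int p)"
proof -
  have "\<not> (\<forall>x\<in>F. \<forall>y\<in>F. [dot n w x = dot n w y] (mod int p))"
  proof
    assume all: "\<forall>x\<in>F. \<forall>y\<in>F. [dot n w x = dot n w y] (mod int p)"
    have "\<exists>s. \<forall>x\<in>F. [dot n w x = s] (mod int p)"
    proof (cases "F = {}")
      case False
      then obtain y where "y \<in> F" by blast
      with all show ?thesis by blast
    qed simp
    with assms show False
      unfolding constant_forms_def by blast
  qed
  then show ?thesis
    using that by blast
qed

lemma card_fibre_constant_forms_le_1:
  assumes "x0 \<in> slice n F 0" "x1 \<in> slice n F 1"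
  shows "card (fibre p n (constant_forms p (Suc n) F) w) \<le> 1"
proof -
  have "card (fibre p n (constant_forms p (Suc n) F) w) \<le> card {dot n w x0 - dot n w x1}"
  proof (rule card_le_card_if_cong)
    fix a assume "a \<in> fibre p n (constant_forms p (Suc n) F) w"
    then have "w(n := a) \<in> constant_forms p (Suc n) F"
      by (simp add: fibre_def)
    then obtain s where s: "\<forall>j. \<forall>x\<in>slice n F j. [dot n w x + a * j = s] (mod int p)"
      by (rule constant_forms_SucE)
    have "[dot n w x1 + a = s] (mod int p)" "[dot n w x0 = s] (mod int p)"
      using s[rule_format, OF assms(2)] s[rule_format, OF assms(1)] by simp_all
    then have "int p dvd (dot n w x1 + a - s) - (dot n w x0 - s)"
      unfolding cong_iff_dvd_diff by (rule dvd_diff)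
    then show "\<exists>e\<in>{dot n w x0 - dot n w x1}. [a = e] (mod int p)"
      by (simp add: cong_iff_dvd_diff algebra_simps)
  qed (auto simp: fibre_def)
  then show ?thesis by simp
qed

lemma card_fibre_boolean_forms_le_3:
  assumes "x0 \<in> slice n E 0" "x1 \<in> slice n E 1"
  shows "card (fibre p n (boolean_forms p (Suc n) E) w) \<le> 3"
proof -
  let ?K = "dot n w x0 - dot n w x1"
  have "card (fibre p n (boolean_forms p (Suc n) E) w) \<le> card {?K - 1, ?K, ?K + 1}"
  proof (rule card_le_card_if_cong)
    fix a assume "a \<in> fibre p n (boolean_forms p (Suc n) E) w"
    then have "w(n := a) \<in> boolean_forms p (Suc n) E"
      by (simp add: fibre_def)
    then obtain t where t: "\<forall>j. \<forall>x\<in>slice n E j. (dot n w x + a * j - t) mod int p \<in> {0, 1}"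
      by (rule boolean_forms_SucE)
    define \<alpha> where "\<alpha> = (dot n w x0 - t) mod int p"
    define \<beta> where "\<beta> = (dot n w x1 + a - t) mod int p"
    have "\<alpha> \<in> {0, 1}" "\<beta> \<in> {0, 1}"
      using t[rule_format, OF assms(1)] t[rule_format, OF assms(2)] by (simp_all add: \<alpha>_def \<beta>_def)
    moreover have "int p dvd (dot n w x1 + a - t - \<beta>) - (dot n w x0 - t - \<alpha>)"
      unfolding \<alpha>_def \<beta>_def by (rule dvd_diff) (simp_all add: dvd_minus_mod)
    then have "[a = ?K + (\<beta> - \<alpha>)] (mod int p)"
      by (simp add: cong_iff_dvd_diff algebra_simps)
    ultimately show "\<exists>e\<in>{?K - 1, ?K, ?K + 1}. [a = e] (mod int p)"
      by auto
  qed (auto simp: fibre_def)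
  also have "\<dots> \<le> 3"
    by (simp add: card_insert_if)
  finally show ?thesis .
qed

lemma card_fibre_boolean_forms_le_1:
  assumes "odd p" "w \<in> Fp_vectors p n"
    and "w \<notin> constant_forms p n (slice n E 0)" "w \<notin> constant_forms p n (slice n E 1)"
  shows "card (fibre p n (boolean_forms p (Suc n) E) w) \<le> 1"
proof -
  obtain y0 y0' where y0: "y0 \<in> slice n E 0" "y0' \<in> slice n E 0"
    "[dot n w y0 \<noteq> dot n w y0'] (mod int p)"
    using not_in_constant_formsE[OF assms(2,3)] .
  obtain y1 y1' where y1: "y1 \<in> slice n E 1" "y1' \<in> slice n E 1"
    "[dot n w y1 \<noteq> dot n w y1'] (mod int p)"
    using not_in_constant_formsE[OF assms(2,4)] .
  let ?K = "dot n w y0 + dot n w y0' - dot n w y1 - dot n w y1'"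
  have twice: "[?K = 2 * a] (mod int p)" if "a \<in> fibre p n (boolean_forms p (Suc n) E) w" for a
  proof -
    have "w(n := a) \<in> boolean_forms p (Suc n) E"
      using that by (simp add: fibre_def)
    then obtain t where t: "\<forall>j. \<forall>x\<in>slice n E j. (dot n w x + a * j - t) mod int p \<in> {0, 1}"
      by (rule boolean_forms_SucE)
    have "[(dot n w y0 - t) + (dot n w y0' - t) = 1] (mod int p)"
      using t[rule_format, OF y0(1)] t[rule_format, OF y0(2)] y0(3)
      by (intro cong_add_eq_1_if_distinct_bits) (simp_all add: cong_iff_dvd_diff)
    moreover have "[(dot n w y1 + a - t) + (dot n w y1' + a - t) = 1] (mod int p)"
      using t[rule_format, OF y1(1)] t[rule_format, OF y1(2)] y1(3)
      by (intro cong_add_eq_1_if_distinct_bits) (simp_all add: cong_iff_dvd_diff)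
    ultimately have "int p dvd ((dot n w y0 - t) + (dot n w y0' - t) - 1)
        - ((dot n w y1 + a - t) + (dot n w y1' + a - t) - 1)"
      unfolding cong_iff_dvd_diff by (rule dvd_diff)
    then show ?thesis
      by (simp add: cong_iff_dvd_diff algebra_simps)
  qed
  have "coprime 2 (int p)"
    using assms(1) by simp
  show ?thesis
  proof (rule card_le_1_if_cong)
    fix a b
    assume "a \<in> fibre p n (boolean_forms p (Suc n) E) w" and "b \<in> fibre p n (boolean_forms p (Suc n) E) w"
    then have "[2 * a = 2 * b] (mod int p)"
      by (metis twice cong_sym cong_trans)
    then show "[a = b] (mod int p)"
      using cong_mult_lcancel[OF \<open>coprime 2 (int p)\<close>] by simp
  qed (auto simp: fibre_def)
qed

lemma card_constant_forms_Suc_le_mult: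
  "card (constant_forms p (Suc n) F) \<le> p * card (constant_forms p n (slice n F j))"
proof (rule card_le_mult_card_if_card_fibre_le[where p = p and n = n])
  show "constant_forms p (Suc n) F \<subseteq> Fp_vectors p (Suc n)"
    by (rule constant_forms_subset)
  show "finite (constant_forms p n (slice n F j))"
    by (rule finite_subset[OF constant_forms_subset finite_Fp_vectors])
  show "w \<in> constant_forms p n (slice n F j)"
    if "w \<in> Fp_vectors p n" "w(n := a) \<in> constant_forms p (Suc n) F" for w a
    using that by (rule constant_forms_slice)
qed (rule card_fibre_le)

lemma card_constant_forms_Suc_le:
  assumes "slice n F 0 \<noteq> {}" "slice n F 1 \<noteq> {}"
  shows "card (constant_forms p (Suc n) F) \<le> card (constant_forms p n (slice n F j))"
proof -
  obtain x0 x1 where "x0 \<in> slice n F 0" "x1 \<in> slice n F 1"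
    using assms by blast
  then have "card (constant_forms p (Suc n) F) \<le> 1 * card (constant_forms p n (slice n F j))"
    by (intro card_le_mult_card_if_card_fibre_le[where p = p and n = n] card_fibre_constant_forms_le_1)
      (auto simp: constant_forms_subset constant_forms_slice intro: finite_subset[OF constant_forms_subset])
  then show ?thesis by simp
qed

lemma card_boolean_forms_Suc_le_mult:
  "card (boolean_forms p (Suc n) E) \<le> p * card (boolean_forms p n (slice n E j))"
proof (rule card_le_mult_card_if_card_fibre_le[where p = p and n = n])
  show "boolean_forms p (Suc n) E \<subseteq> Fp_vectors p (Suc n)"
    by (rule boolean_forms_subset)
  show "finite (boolean_forms p n (slice n E j))"
    by (rule finite_subset[OF boolean_forms_subset finite_Fp_vectors])
  show "w \<in> boolean_forms p n (slice n E j)"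
    if "w \<in> Fp_vectors p n" "w(n := a) \<in> boolean_forms p (Suc n) E" for w a
    using that by (rule boolean_forms_slice)
qed (rule card_fibre_le)

lemma card_fibre_boolean_forms_le:
  assumes "odd p" "w \<in> Fp_vectors p n" "slice n E 0 \<noteq> {}" "slice n E 1 \<noteq> {}"
  shows "card (fibre p n (boolean_forms p (Suc n) E) w)
    \<le> 1 + 2 * of_bool (w \<in> constant_forms p n (slice n E 0))
        + 2 * of_bool (w \<in> constant_forms p n (slice n E 1))"
proof (cases "w \<in> constant_forms p n (slice n E 0) \<or> w \<in> constant_forms p n (slice n E 1)")
  case True
  obtain x0 x1 where "x0 \<in> slice n E 0" "x1 \<in> slice n E 1"
    using assms(3,4) by blast
  then have "card (fibre p n (boolean_forms p (Suc n) E) w) \<le> 3"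
    by (rule card_fibre_boolean_forms_le_3)
  with True show ?thesis
    by auto
next
  case False
  then show ?thesis
    using card_fibre_boolean_forms_le_1[OF assms(1,2)] by auto
qed

lemma card_boolean_forms_Suc_le:
  assumes "odd p" "slice n E 0 \<noteq> {}" "slice n E 1 \<noteq> {}"
  shows "card (boolean_forms p (Suc n) E) \<le> card (boolean_forms p n (slice n E j))
    + 2 * card (constant_forms p n (slice n E 0)) + 2 * card (constant_forms p n (slice n E 1))"
proof -
  let ?B = "boolean_forms p n (slice n E j)"
  let ?C0 = "constant_forms p n (slice n E 0)" and ?C1 = "constant_forms p n (slice n E 1)"
  have finite_B: "finite ?B"
    by (rule finite_subset[OF boolean_forms_subset finite_Fp_vectors])
  have "card (boolean_forms p (Suc n) E) \<le> (\<Sum>w\<in>?B. card (fibre p n (boolean_forms p (Suc n) E) w))"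
  proof (rule card_le_sum_card_fibre[where p = p and n = n])
    show "boolean_forms p (Suc n) E \<subseteq> Fp_vectors p (Suc n)"
      by (rule boolean_forms_subset)
    show "w \<in> ?B" if "w \<in> Fp_vectors p n" "w(n := a) \<in> boolean_forms p (Suc n) E" for w a
      using that by (rule boolean_forms_slice)
  qed (rule finite_B)
  also have "\<dots> \<le> (\<Sum>w\<in>?B. 1 + 2 * of_bool (w \<in> ?C0) + 2 * of_bool (w \<in> ?C1))"
    using assms boolean_forms_subset
    by (intro sum_mono card_fibre_boolean_forms_le) auto
  also have "\<dots> = card ?B + 2 * card (?B \<inter> ?C0) + 2 * card (?B \<inter> ?C1)"
    using finite_B by (simp only: sum.distrib flip: sum_distrib_left) simp
  also have "\<dots> \<le> card ?B + 2 * card ?C0 + 2 * card ?C1"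
    using finite_B by (intro add_mono mult_left_mono card_mono) (auto intro: finite_subset[OF constant_forms_subset])
  finally show ?thesis .
qed

section \<open>Number of forms versus density\<close>

lemma two_mult_powr_log2:
  fixes p x :: real
  assumes "0 < p"
  shows "(2 * x) powr log 2 p = p * x powr log 2 p"
  using assms by (simp add: powr_mult)

lemma powr_double_exponent: "x powr (2 * a) = (x * x) powr a" for x a :: real
  by (simp only: powr_mult mult_2 powr_add[symmetric])

lemma two_mult_cube_density_Suc:
  assumes "F \<subseteq> binvecs (Suc n)" "{i, j} = {0, 1}"
  shows "2 * cube_density (Suc n) F = cube_density n (slice n F i) + cube_density n (slice n F j)"
proof -
  have "2 * cube_density (Suc n) F = cube_density n (slice n F 0) + cube_density n (slice n F 1)"
    using card_slices[OF assms(1)] by (simp add: cube_density_def add_divide_distrib)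
  then show ?thesis
    using assms(2) by (auto simp: doubleton_eq_iff)
qed

lemma denser_sliceE:
  obtains i j :: int where "{i, j} = {0, 1}"
    "cube_density n (slice n F i) \<le> cube_density n (slice n F j)"
proof (cases "cube_density n (slice n F 0) \<le> cube_density n (slice n F 1)")
  case True
  then show ?thesis
    by (intro that[of 0 1]) auto
next
  case False
  then show ?thesis
    by (intro that[of 1 0]) (auto simp: insert_commute)
qed

lemma mult_powr_two_mult_log2_le:
  fixes p x y :: real
  assumes "1 \<le> p" "0 \<le> x" "3 * x \<le> 2 * y"
  shows "p * x powr (2 * log 2 p) \<le> y powr (2 * log 2 p)"
proof -
  have "x * x \<le> (2 / 3 * y) * (2 / 3 * y)"
    using assms(2,3) by (intro mult_mono) auto
  also have "\<dots> \<le> (y * y) / 2"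
    by (simp add: field_simps)
  finally have square: "x * x \<le> (y * y) / 2" .
  have "p * x powr (2 * log 2 p) = p * (x * x) powr log 2 p"
    by (simp add: powr_double_exponent)
  also have "\<dots> \<le> p * ((y * y) / 2) powr log 2 p"
    using square assms(1,2) by (intro mult_left_mono powr_mono2) auto
  also have "\<dots> = y powr (2 * log 2 p)"
    using assms(1) by (simp add: powr_double_exponent two_mult_powr_log2[symmetric])
  finally show ?thesis .
qed

text \<open>An empty slice halves the density, which pays for the p possible last coefficients;
  otherwise the last coefficient is unique and the denser slice is at least as dense as F.\<close>
lemma card_constant_forms_Suc_powr_le:
  assumes "0 < p" "F \<subseteq> binvecs (Suc n)" "{i, j} = {0, 1}"
    and le: "cube_density n (slice n F i) \<le> cube_density n (slice n F j)"
  shows "card (constant_forms p (Suc n) F) * cube_density (Suc n) F powr log 2 p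
    \<le> card (constant_forms p n (slice n F j)) * cube_density n (slice n F j) powr log 2 p"
proof -
  let ?l = "log 2 p" and ?\<delta> = "cube_density (Suc n) F" and ?\<delta>j = "cube_density n (slice n F j)"
  let ?C = "card (constant_forms p n (slice n F j))"
  have avg: "2 * ?\<delta> = cube_density n (slice n F i) + ?\<delta>j"
    using assms(2,3) by (rule two_mult_cube_density_Suc)
  show ?thesis
  proof (cases "slice n F i = {}")
    case True
    then have "?\<delta>j = 2 * ?\<delta>"
      using avg by (simp add: cube_density_def)
    then have double: "?\<delta>j powr ?l = p * ?\<delta> powr ?l"
      using assms(1) by (simp add: two_mult_powr_log2)
    have "card (constant_forms p (Suc n) F) * ?\<delta> powr ?l \<le> (p * ?C) * ?\<delta> powr ?l"
      using card_constant_forms_Suc_le_mult[of p n F j]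
      by (intro mult_right_mono) (simp_all flip: of_nat_mult)
    also have "\<dots> = ?C * ?\<delta>j powr ?l"
      by (simp add: double)
    finally show ?thesis .
  next
    case False
    then have "slice n F j \<noteq> {}"
      using le cube_density_pos_iff[OF slice_subset_binvecs] by (metis order.strict_trans2)
    with False assms(3) have "slice n F 0 \<noteq> {}" "slice n F 1 \<noteq> {}"
      by (auto simp: doubleton_eq_iff)
    then have "card (constant_forms p (Suc n) F) \<le> ?C"
      by (rule card_constant_forms_Suc_le)
    moreover have "?\<delta> \<le> ?\<delta>j"
      using avg le by simp
    ultimately show ?thesis
      using assms(1) by (intro mult_mono powr_mono2) (auto simp: cube_density_nonneg)
  qed
qed

lemma card_constant_forms_cube_density_bound:
  assumes "0 < p" "F \<subseteq> binvecs n"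
  shows "card (constant_forms p n F) * cube_density n F powr log 2 p \<le> 1"
  using assms(2)
proof (induction n arbitrary: F)
  case 0
  have "card (constant_forms p 0 F) \<le> card (Fp_vectors p 0)"
    by (intro card_mono finite_Fp_vectors constant_forms_subset)
  moreover have "cube_density 0 F powr log 2 p \<le> 1"
    using 0 assms(1) by (intro powr_le1) (auto simp: cube_density_nonneg cube_density_le_1)
  ultimately show ?case
    by (intro mult_le_one) (auto simp: card_Fp_vectors)
next
  case (Suc n)
  obtain i j where "{i, j} = {0, 1}" "cube_density n (slice n F i) \<le> cube_density n (slice n F j)"
    by (rule denser_sliceE)
  with assms(1) Suc.prems have "card (constant_forms p (Suc n) F) * cube_density (Suc n) F powr log 2 p
      \<le> card (constant_forms p n (slice n F j)) * cube_density n (slice n F j) powr log 2 p"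
    by (rule card_constant_forms_Suc_powr_le)
  also have "\<dots> \<le> 1"
    using Suc.IH[OF slice_subset_binvecs] .
  finally show ?case .
qed

lemma card_constant_forms_powr_le:
  assumes "0 < p" "F \<subseteq> binvecs n" "0 \<le> \<delta>" "\<delta> \<le> 1" "\<delta> \<le> 2 * cube_density n F"
  shows "card (constant_forms p n F) * \<delta> powr (2 * log 2 p) \<le> p"
proof -
  let ?l = "log 2 p" and ?C = "card (constant_forms p n F)"
  have "\<delta> powr (2 * ?l) = \<delta> powr ?l * \<delta> powr ?l"
    by (simp only: mult_2 powr_add)
  also have "\<dots> \<le> (2 * cube_density n F) powr ?l * 1"
    using assms by (intro mult_mono powr_mono2 powr_le1) auto
  also have "\<dots> = p * cube_density n F powr ?l"
    using assms(1) by (simp add: two_mult_powr_log2)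
  finally have "?C * \<delta> powr (2 * ?l) \<le> ?C * (p * cube_density n F powr ?l)"
    by (rule mult_left_mono) simp
  also have "\<dots> = p * (?C * cube_density n F powr ?l)"
    by simp
  also have "\<dots> \<le> p"
    using card_constant_forms_cube_density_bound[OF assms(1,2)] by (simp add: mult_left_le)
  finally show ?thesis .
qed

lemma card_boolean_forms_Suc_powr_le_of_thin_slice:
  assumes "0 < p" "E \<subseteq> binvecs (Suc n)" "{i, j} = {0, 1}"
    and "2 * cube_density n (slice n E i) \<le> cube_density (Suc n) E"
  shows "card (boolean_forms p (Suc n) E) * cube_density (Suc n) E powr (2 * log 2 p)
    \<le> card (boolean_forms p n (slice n E j)) * cube_density n (slice n E j) powr (2 * log 2 p)"
proof -
  let ?l = "log 2 p" and ?\<delta> = "cube_density (Suc n) E" and ?\<delta>j = "cube_density n (slice n E j)"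
  let ?B = "card (boolean_forms p n (slice n E j))"
  have "3 * ?\<delta> \<le> 2 * ?\<delta>j"
    using assms(4) two_mult_cube_density_Suc[OF assms(2,3)] by linarith
  then have thin: "p * ?\<delta> powr (2 * ?l) \<le> ?\<delta>j powr (2 * ?l)"
    using assms(1) by (intro mult_powr_two_mult_log2_le) (auto simp: cube_density_nonneg)
  have "card (boolean_forms p (Suc n) E) * ?\<delta> powr (2 * ?l) \<le> (p * ?B) * ?\<delta> powr (2 * ?l)"
    using card_boolean_forms_Suc_le_mult[of p n E j]
    by (intro mult_right_mono) (simp_all flip: of_nat_mult)
  also have "\<dots> = ?B * (p * ?\<delta> powr (2 * ?l))"
    by simp
  also have "\<dots> \<le> ?B * ?\<delta>j powr (2 * ?l)"
    using thin by (rule mult_left_mono) simp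
  finally show ?thesis .
qed

lemma card_boolean_forms_Suc_powr_le_of_thick_slices:
  assumes "odd p" "E \<subseteq> binvecs (Suc n)" "{i, j} = {0, 1}"
    and le: "cube_density n (slice n E i) \<le> cube_density n (slice n E j)"
    and thick: "cube_density (Suc n) E < 2 * cube_density n (slice n E i)"
  shows "card (boolean_forms p (Suc n) E) * cube_density (Suc n) E powr (2 * log 2 p)
    \<le> card (boolean_forms p n (slice n E j)) * cube_density n (slice n E j) powr (2 * log 2 p) + 4 * real p"
proof -
  let ?l = "log 2 p" and ?\<delta> = "cube_density (Suc n) E" and ?\<delta>j = "cube_density n (slice n E j)"
  let ?B = "card (boolean_forms p n (slice n E j))"
  let ?C0 = "card (constant_forms p n (slice n E 0))" and ?C1 = "card (constant_forms p n (slice n E 1))"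
  have p: "0 < p"
    using assms(1) by (rule odd_pos)
  have "0 \<le> ?\<delta>"
    by (rule cube_density_nonneg)
  have avg: "2 * ?\<delta> = cube_density n (slice n E i) + ?\<delta>j"
    using assms(2,3) by (rule two_mult_cube_density_Suc)
  have "slice n E i \<noteq> {}" "slice n E j \<noteq> {}"
    using le thick \<open>0 \<le> ?\<delta>\<close> cube_density_pos_iff[OF slice_subset_binvecs] by fastforce+
  with assms(3) have "slice n E 0 \<noteq> {}" "slice n E 1 \<noteq> {}"
    by (auto simp: doubleton_eq_iff)
  with assms(1) have "card (boolean_forms p (Suc n) E) \<le> ?B + 2 * ?C0 + 2 * ?C1"
    by (intro card_boolean_forms_Suc_le)
  then have step: "real (card (boolean_forms p (Suc n) E)) \<le> real (?B + 2 * ?C0 + 2 * ?C1)"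
    by (rule of_nat_mono)
  have C: "card (constant_forms p n (slice n E k)) * ?\<delta> powr (2 * ?l) \<le> p" if "k \<in> {0, 1}" for k
  proof (rule card_constant_forms_powr_le[OF p slice_subset_binvecs \<open>0 \<le> ?\<delta>\<close>])
    show "?\<delta> \<le> 1"
      using assms(2) by (rule cube_density_le_1)
    show "?\<delta> \<le> 2 * cube_density n (slice n E k)"
      using thick le that assms(3) by (auto simp: doubleton_eq_iff)
  qed
  have B: "?B * ?\<delta> powr (2 * ?l) \<le> ?B * ?\<delta>j powr (2 * ?l)"
    using avg le p \<open>0 \<le> ?\<delta>\<close> by (intro mult_left_mono powr_mono2) auto
  have "card (boolean_forms p (Suc n) E) * ?\<delta> powr (2 * ?l)
      \<le> real (?B + 2 * ?C0 + 2 * ?C1) * ?\<delta> powr (2 * ?l)"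
    using step by (rule mult_right_mono) simp
  also have "\<dots> = ?B * ?\<delta> powr (2 * ?l) + 2 * (?C0 * ?\<delta> powr (2 * ?l)) + 2 * (?C1 * ?\<delta> powr (2 * ?l))"
    by (simp add: algebra_simps)
  also have "\<dots> \<le> ?B * ?\<delta>j powr (2 * ?l) + 4 * real p"
    using B C[of 0] C[of 1] by simp
  finally show ?thesis .
qed

lemma card_boolean_forms_cube_density_bound:
  assumes "odd p" "E \<subseteq> binvecs n"
  shows "card (boolean_forms p n E) * cube_density n E powr (2 * log 2 p) \<le> 1 + 4 * real p * real n"
  using assms(2)
proof (induction n arbitrary: E)
  case 0
  have "card (boolean_forms p 0 E) \<le> card (Fp_vectors p 0)"
    by (intro card_mono finite_Fp_vectors boolean_forms_subset)
  moreover have "cube_density 0 E powr (2 * log 2 p) \<le> 1"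
    using 0 odd_pos[OF assms(1)] by (intro powr_le1) (auto simp: cube_density_nonneg cube_density_le_1)
  ultimately show ?case
    by (simp add: mult_le_one card_Fp_vectors)
next
  case (Suc n)
  let ?l = "log 2 p" and ?\<delta> = "cube_density (Suc n) E"
  obtain i j where ij: "{i, j} = {0, 1}"
    and le: "cube_density n (slice n E i) \<le> cube_density n (slice n E j)"
    by (rule denser_sliceE)
  have "card (boolean_forms p (Suc n) E) * ?\<delta> powr (2 * ?l)
      \<le> card (boolean_forms p n (slice n E j)) * cube_density n (slice n E j) powr (2 * ?l) + 4 * real p"
  proof (cases "2 * cube_density n (slice n E i) \<le> ?\<delta>")
    case True
    with odd_pos[OF assms(1)] Suc.prems ij
    have "card (boolean_forms p (Suc n) E) * ?\<delta> powr (2 * ?l)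
        \<le> card (boolean_forms p n (slice n E j)) * cube_density n (slice n E j) powr (2 * ?l)"
      by (rule card_boolean_forms_Suc_powr_le_of_thin_slice)
    then show ?thesis
      by linarith
  next
    case False
    with assms(1) Suc.prems ij le show ?thesis
      by (intro card_boolean_forms_Suc_powr_le_of_thick_slices) auto
  qed
  also have "\<dots> \<le> 1 + 4 * real p * real n + 4 * real p"
    using Suc.IH[OF slice_subset_binvecs] by simp
  also have "\<dots> = 1 + 4 * real p * real (Suc n)"
    by (simp add: algebra_simps)
  finally show ?case .
qed

section \<open>Numerical estimates\<close>

lemma pow4_le_two_pow: "36 \<le> n \<Longrightarrow> 625 * n ^ 4 \<le> (2::nat) ^ n"
proof (induction n rule: dec_induct)
  case (step n)
  have "15 * n ^ 3 \<le> n * n ^ 3"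
    using step(1) by (intro mult_right_mono) auto
  also have "\<dots> = n ^ 4"
    by (simp add: eval_nat_numeral)
  finally have "15 * n ^ 3 \<le> n ^ 4" .
  moreover have "n ^ 2 \<le> n ^ 3" "n \<le> n ^ 3" "1 \<le> n ^ 3"
    using step(1) by (auto intro: power_increasing simp: eval_nat_numeral)
  moreover have "Suc n ^ 4 = n ^ 4 + 4 * n ^ 3 + 6 * n ^ 2 + 4 * n + 1"
    by (simp add: eval_nat_numeral algebra_simps)
  ultimately have "Suc n ^ 4 \<le> 2 * n ^ 4"
    by linarith
  then show ?case
    using step(3) by simp
qed simp

lemma five_mult_le_two_powr:
  assumes "36 \<le> d"
  shows "5 * real d \<le> 2 powr (real d / 4)"
proof -
  have "real (625 * d ^ 4) \<le> real ((2::nat) ^ d)"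
    using pow4_le_two_pow[OF assms] by (simp only: of_nat_le_iff)
  then have "(5 * real d) ^ 4 \<le> 2 ^ d"
    by (simp add: power_mult_distrib)
  also have "(2::real) ^ d = (2 powr (real d / 4)) ^ 4"
  proof -
    have "(2 powr (real d / 4)) ^ 4 = (2::real) powr (real 4 * (real d / 4))"
      by (rule powr_power) simp
    also have "\<dots> = 2 ^ d"
      by (simp add: powr_realpow)
    finally show ?thesis ..
  qed
  finally have "(5 * real d) ^ Suc 3 \<le> (2 powr (real d / 4)) ^ Suc 3"
    by simp
  then show ?thesis
    by (rule power_le_imp_le_base) simp
qed

lemma one_add_four_mult_le_two_powr:
  fixes p d :: nat
  assumes "3 \<le> p" "36 * log 2 p \<le> d"
  shows "1 + 4 * real p * real d \<le> 2 powr (real d / 3 - 2 * log 2 p * real d / (36 * (real p)\<^sup>2))"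
proof -
  let ?l = "log 2 p"
  have "1 \<le> ?l"
    using assms(1) by simp
  then have "36 \<le> d"
    using assms(2) by linarith
  have "real p < 2 powr real p"
    using less_exp[of p] by (simp add: powr_realpow)
  then have "?l < p"
    using assms(1) by (subst log_less_iff) auto
  then have "2 * ?l * real d / (36 * (real p)\<^sup>2) \<le> 2 * real p * real d / (36 * (real p)\<^sup>2)"
    by (intro divide_right_mono mult_right_mono) auto
  also have "\<dots> = real d / (18 * real p)"
    using assms(1) by (simp add: power2_eq_square)
  also have "\<dots> \<le> real d / 54"
    using assms(1) by (intro divide_left_mono) auto
  finally have small: "2 * ?l * real d / (36 * (real p)\<^sup>2) \<le> real d / 54" .
  have "1 \<le> real p * real d"
    using assms(1) \<open>36 \<le> d\<close> mult_mono[of 1 "real p" 1 "real d"] by simp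
  then have "1 + 4 * real p * real d \<le> real p * (5 * real d)"
    by (simp add: mult.commute)
  also have "\<dots> \<le> 2 powr (real d / 36) * 2 powr (real d / 4)"
  proof (rule mult_mono)
    have "?l \<le> real d / 36"
      using assms(2) by simp
    then show "real p \<le> 2 powr (real d / 36)"
      using powr_mono[of ?l "real d / 36" 2] assms(1) by simp
    show "5 * real d \<le> 2 powr (real d / 4)"
      using \<open>36 \<le> d\<close> by (rule five_mult_le_two_powr)
  qed auto
  also have "\<dots> = 2 powr (real d / 36 + real d / 4)"
    by (rule powr_add[symmetric])
  also have "\<dots> \<le> 2 powr (real d / 3 - 2 * ?l * real d / (36 * (real p)\<^sup>2))"
    using small by simp
  finally show ?thesis .
qed

lemma le_two_powr_if_count_bound:
  fixes p d c :: nat and P :: real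
  assumes "3 \<le> p" "36 * log 2 p \<le> d" "2 powr (real d / 3) \<le> c" "0 \<le> P"
    and "c * P powr (2 * log 2 p) \<le> 1 + 4 * real p * real d"
  shows "P \<le> 2 powr (- real d / (36 * (real p)\<^sup>2))"
proof (rule ccontr)
  let ?l = "log 2 p" and ?R = "2 powr (- real d / (36 * (real p)\<^sup>2))"
  assume "\<not> P \<le> ?R"
  then have "?R powr (2 * ?l) < P powr (2 * ?l)"
    using assms(1) by (intro powr_less_mono2) auto
  moreover have "?R powr (2 * ?l) = 2 powr (- (2 * ?l * real d / (36 * (real p)\<^sup>2)))"
    by (simp add: powr_powr)
  moreover have "0 < real c"
    using assms(3) powr_gt_zero[of 2 "real d / 3"] by linarith
  ultimately have "c * 2 powr (- (2 * ?l * real d / (36 * (real p)\<^sup>2))) < 1 + 4 * real p * real d"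
    using assms(5) by (metis mult_strict_left_mono order.strict_trans2)
  also have "\<dots> \<le> 2 powr (real d / 3) * 2 powr (- (2 * ?l * real d / (36 * (real p)\<^sup>2)))"
    using one_add_four_mult_le_two_powr[OF assms(1,2)] by (simp flip: powr_add)
  also have "\<dots> \<le> c * 2 powr (- (2 * ?l * real d / (36 * (real p)\<^sup>2)))"
    using assms(3) by (rule mult_right_mono) simp
  finally show False
    by simp
qed

lemma card_columns_le_card_boolean_forms:
  assumes "is_Fp_matrix p d c L" "distinct_columns d c L"
  shows "c \<le> card (boolean_forms p d {v \<in> binvecs d. \<forall>j<c. transp_mult_mod p d L v j \<in> {0, 1}})"
    (is "c \<le> card (boolean_forms p d ?E)")
proof -
  define col where "col j = restrict (\<lambda>i. L i j) {0..<d}" for j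
  have "col j \<in> boolean_forms p d ?E" if "j < c" for j
  proof -
    have "col j \<in> Fp_vectors p d"
      using assms(1) that by (simp add: col_def Fp_vectors_def is_Fp_matrix_def restrict_PiE_iff)
    moreover have "(dot d (col j) x - 0) mod int p \<in> {0, 1}" if "x \<in> ?E" for x
      using that \<open>j < c\<close> by (simp add: dot_def col_def transp_mult_mod_def)
    ultimately show ?thesis
      unfolding boolean_forms_def by blast
  qed
  moreover have "inj_on col {..<c}"
  proof (rule inj_onI)
    fix j k assume "j \<in> {..<c}" "k \<in> {..<c}" "col j = col k"
    then show "j = k"
      using assms(2) unfolding distinct_columns_def col_def by (metis atLeastLessThan_iff lessThan_iff restrict_apply' zero_le)
  qed
  ultimately have "card {..<c} \<le> card (boolean_forms p d ?E)"
    by (intro card_inj_on_le finite_subset[OF boolean_forms_subset finite_Fp_vectors]) auto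
  then show ?thesis
    by simp
qed

lemma prob_pmf_of_binvecs: "measure_pmf.prob (pmf_of_set (binvecs d)) S = cube_density d (binvecs d \<inter> S)"
proof -
  have "binvecs d \<noteq> {}"
    using card_binvecs[of d] by auto
  then show ?thesis
    by (simp add: measure_pmf_of_set cube_density_def card_binvecs Int_commute)
qed

theorem lemma4p1:
  fixes p c d :: nat and L :: "nat \<Rightarrow> nat \<Rightarrow> int"
  assumes "prime p" and "odd p"
    and "c > 0" and "d > 0"
    and "36 * log 2 (real p) \<le> real d" and "real d \<le> 3 * log 2 (real c)"
    and "is_Fp_matrix p d c L"
    and "distinct_columns d c L"
  shows "measure_pmf.prob (pmf_of_set (binvecs d))
           {v. \<forall>j<c. transp_mult_mod p d L v j \<in> {0, 1}}
         \<le> 3 * 2 powr (- real d / (36 * (real p)\<^sup>2))"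
proof -
  define E where "E = {v \<in> binvecs d. \<forall>j<c. transp_mult_mod p d L v j \<in> {0, 1}}"
  have "3 \<le> p"
    using prime_ge_2_nat[OF assms(1)] assms(2) by presburger
  have "c \<le> card (boolean_forms p d E)"
    unfolding E_def using assms(7,8) by (rule card_columns_le_card_boolean_forms)
  then have "c * cube_density d E powr (2 * log 2 p)
      \<le> card (boolean_forms p d E) * cube_density d E powr (2 * log 2 p)"
    by (intro mult_right_mono) simp_all
  also have "\<dots> \<le> 1 + 4 * real p * real d"
    using assms(2) by (rule card_boolean_forms_cube_density_bound) (auto simp: E_def)
  finally have count: "c * cube_density d E powr (2 * log 2 p) \<le> 1 + 4 * real p * real d" .
  have "2 powr (real d / 3) \<le> c"
    using assms(3,6) by (simp add: powr_le_iff le_log_iff)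
  then have "cube_density d E \<le> 2 powr (- real d / (36 * (real p)\<^sup>2))"
    by (rule le_two_powr_if_count_bound[OF \<open>3 \<le> p\<close> assms(5) _ cube_density_nonneg count])
  moreover have "measure_pmf.prob (pmf_of_set (binvecs d)) {v. \<forall>j<c. transp_mult_mod p d L v j \<in> {0, 1}}
      = cube_density d E"
    unfolding prob_pmf_of_binvecs E_def by (metis Collect_conj_eq Collect_mem_eq)
  ultimately show ?thesis
    using powr_ge_zero[of 2 "- real d / (36 * (real p)\<^sup>2)"] by linarith
qed

end
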